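(* For every $f$ in the Bergman space $\mathfrak{B}^1$ and every finite positive Borel measure $\mu$ on $\mathbb{D}$, one has, for $0<h<1/2$ and $t>0$, $$\mu\big(\{z\in\mathbb{D}:|z|>1-h\text{ and }|f(z)|>t\}\big)\le4\,K_{\mu,2}(2h)\,\mathcal{A}(\{\Lambda_f>t\}).$$
   Context: $\mathbb{D}$ is the open unit disk, $\mathbb{T}$ the unit circle, $\mathcal{A}$ the normalized area measure $dx\,dy/\pi$; $\mathfrak{B}^1$ is the space of analytic functions in $L^1(\mathbb{D},\mathcal{A})$. For $\xi\in\mathbb{T}$, $0<h\le1$: $W(\xi,h)=\{z\in\mathbb{D}:|z|\ge1-h,\ |\arg(z\bar\xi)|\le\pi h\}$, $\rho_\mu(h)=\sup_{\xi\in\mathbb{T}}\mu(W(\xi,h))$, $K_{\mu,2}(h)=\sup_{0<t<h}\rho_\mu(t)/t^2$. Hastings–Luecking sets: for $k=2^n+j-1$, $n\ge0$, $0\le j\le2^n-1$, $\Delta_k=\{z\in\mathbb{D}:1-2^{-n}\le|z|<1-2^{-n-1},\ (2j-1)\pi/2^n\le\arg z<(2j+1)\pi/2^n\}$. $\Lambda_f=\sum_{k\ge0}(\sup_{\Delta_k}|f|)\mathbf{1}_{\Delta_k}$. *)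

theory Defs
  imports "HOL-Complex_Analysis.Complex_Analysis"
begin

definition area_measure :: "complex measure" where
  "area_measure = density lborel (\<lambda>_. ennreal (1 / pi))"

definition bergman1 :: "(complex \<Rightarrow> complex) set" where
  "bergman1 = {f. f holomorphic_on ball 0 1 \<and> set_integrable area_measure (ball 0 1) f}"

text \<open>Carleson box W(xi,h); arg(z conj xi) is the principal argument in (-pi,pi].\<close>
definition W_box :: "complex \<Rightarrow> real \<Rightarrow> complex set" where
  "W_box \<xi> h = {z \<in> ball 0 1. cmod z \<ge> 1 - h \<and> \<bar>Arg (z * cnj \<xi>)\<bar> \<le> pi * h}"

definition rho :: "complex measure \<Rightarrow> real \<Rightarrow> ennreal" where
  "rho \<mu> h = (SUP \<xi>\<in>sphere 0 1. emeasure \<mu> (W_box \<xi> h))"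

definition K2 :: "complex measure \<Rightarrow> real \<Rightarrow> ennreal" where
  "K2 \<mu> h = (SUP t\<in>{0<..<h}. rho \<mu> t / ennreal (t ^ 2))"

text \<open>Hastings--Luecking sets: k = 2^n + j - 1 with 0 \<le> j \<le> 2^n - 1.
  "arg z in [a,b)" means: some argument of z (determined mod 2 pi) lies in [a,b).\<close>
definition hl_n :: "nat \<Rightarrow> nat" where
  "hl_n k = (GREATEST n. 2 ^ n \<le> k + 1)"

definition hl_j :: "nat \<Rightarrow> nat" where
  "hl_j k = k + 1 - 2 ^ hl_n k"

definition HL_Delta :: "nat \<Rightarrow> complex set" where
  "HL_Delta k = (let n = hl_n k; j = hl_j k in
     {z. 1 - 1 / 2 ^ n \<le> cmod z \<and> cmod z < 1 - 1 / 2 ^ (n + 1) \<and>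
         (\<exists>\<theta>. (2 * real j - 1) * pi / 2 ^ n \<le> \<theta> \<and> \<theta> < (2 * real j + 1) * pi / 2 ^ n \<and>
              z = complex_of_real (cmod z) * cis \<theta>)})"

definition Lambda :: "(complex \<Rightarrow> complex) \<Rightarrow> complex \<Rightarrow> real" where
  "Lambda f z = (\<Sum>k. (SUP w\<in>HL_Delta k. cmod (f w)) * indicator (HL_Delta k) z)"

end

theory Submission
  imports Defs
begin

text \<open>The sets \<open>\<Delta>\<^sub>k\<close> partition the disk and \<open>\<Lambda>\<^sub>f\<close> equals \<open>sup\<^sub>\<Delta>\<^sub>k |f|\<close> on \<open>\<Delta>\<^sub>k\<close>. The part of
  \<open>{|f| > t}\<close> in the annulus \<open>|z| > 1 - h\<close> is covered by those \<open>\<Delta>\<^sub>k\<close> with \<open>sup\<^sub>\<Delta>\<^sub>k |f| > t\<close>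
  and side \<open>s = 2\<^sup>-\<^sup>n < 2h\<close>, and these all lie in \<open>{\<Lambda>\<^sub>f > t}\<close>. Such a \<open>\<Delta>\<^sub>k\<close> sits in a
  Carleson box \<open>W(\<xi>, s)\<close>, so \<open>\<mu>(\<Delta>\<^sub>k) \<le> K\<^sub>\<mu>\<^sub>,\<^sub>2(2h) s\<^sup>2\<close>, while it contains four disjoint disks of
  radius \<open>s/4\<close>, so \<open>\<A>(\<Delta>\<^sub>k) \<ge> s\<^sup>2/4\<close>. Summing over the disjoint \<open>\<Delta>\<^sub>k\<close> gives the estimate.\<close>

section \<open>Dyadic indexing\<close>

lemma hl_n_bounds: "2 ^ hl_n k \<le> k + 1 \<and> k + 1 < 2 ^ (hl_n k + 1)"
proof -
  have bound: "\<forall>y. 2 ^ y \<le> k + 1 \<longrightarrow> y \<le> k + 1"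
    by (metis less_exp dual_order.trans less_imp_le_nat)
  have "2 ^ hl_n k \<le> k + 1"
    unfolding hl_n_def by (rule GreatestI_nat[of _ 0]) (use bound in auto)
  moreover have "\<not> 2 ^ (hl_n k + 1) \<le> k + 1"
  proof
    assume "2 ^ (hl_n k + 1) \<le> k + 1"
    hence "hl_n k + 1 \<le> hl_n k"
      unfolding hl_n_def by (rule Greatest_le_nat) (use bound in auto)
    thus False by simp
  qed
  ultimately show ?thesis by simp
qed

lemma hl_j_less: "hl_j k < 2 ^ hl_n k"
  and hl_index_eq: "k = 2 ^ hl_n k + hl_j k - 1"
  using hl_n_bounds[of k] unfolding hl_j_def by auto

lemma hl_n_index: assumes "j < 2 ^ n" shows "hl_n (2 ^ n + j - 1) = n"
proof -
  have "2 ^ n + j - 1 + 1 = 2 ^ n + j" by (simp add: Suc_leI)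
  thus ?thesis unfolding hl_n_def
  proof (intro Greatest_equality)
    fix y assume "2 ^ y \<le> 2 ^ n + j - 1 + 1"
    also have "\<dots> < 2 ^ Suc n" using assms \<open>2 ^ n + j - 1 + 1 = 2 ^ n + j\<close> by simp
    finally have "y < Suc n" using power_less_imp_less_exp[of "2::nat" y "Suc n"] by simp
    thus "y \<le> n" by simp
  qed simp
qed

lemma hl_j_index: assumes "j < 2 ^ n" shows "hl_j (2 ^ n + j - 1) = j"
  using hl_n_index[OF assms] unfolding hl_j_def by (simp add: Suc_leI)

definition hl_size :: "nat \<Rightarrow> real" where
  "hl_size k = 1 / 2 ^ hl_n k"

definition hl_arg :: "nat \<Rightarrow> real" where
  "hl_arg k = 2 * real (hl_j k) * pi / 2 ^ hl_n k"

lemma hl_size_pos: "0 < hl_size k"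
  by (simp add: hl_size_def)

lemma hl_size_le_half: assumes "hl_size k < 1" shows "hl_size k \<le> 1 / 2"
proof -
  have "hl_n k \<noteq> 0" using assms by (cases "hl_n k") (auto simp: hl_size_def)
  hence "(2::real) ^ 1 \<le> 2 ^ hl_n k" by (intro power_increasing) auto
  thus ?thesis by (simp add: hl_size_def field_simps)
qed

lemma HL_Delta_iff:
  "z \<in> HL_Delta k \<longleftrightarrow> 1 - hl_size k \<le> cmod z \<and> cmod z < 1 - hl_size k / 2 \<and>
     (\<exists>\<theta>. hl_arg k - pi * hl_size k \<le> \<theta> \<and> \<theta> < hl_arg k + pi * hl_size k \<and>
          z = complex_of_real (cmod z) * cis \<theta>)"
proof -
  have "(2 * real (hl_j k) - 1) * pi / 2 ^ hl_n k = hl_arg k - pi * hl_size k"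
    "(2 * real (hl_j k) + 1) * pi / 2 ^ hl_n k = hl_arg k + pi * hl_size k"
    "1 / 2 ^ hl_n k = hl_size k" "1 / 2 ^ (hl_n k + 1) = hl_size k / (2::real)"
    by (simp_all add: hl_arg_def hl_size_def field_simps)
  thus ?thesis unfolding HL_Delta_def Let_def by (simp only: mem_Collect_eq)
qed

lemma cis_eq_imp_eq_in_window:
  assumes "cis a = cis b" "c \<le> a" "a < c + 2 * pi" "c \<le> b" "b < c + 2 * pi"
  shows "a = b"
proof -
  have "cis (c + pi - a) = cis (c + pi - b)"
    using assms(1) by (simp add: cis_divide[symmetric])
  hence "normalize_angle (c + pi - a) = normalize_angle (c + pi - b)"
    by (metis Arg_rcis' rcis_def mult_1 of_real_1 zero_less_one)
  moreover have "c + pi - a \<in> {-pi<..pi}" "c + pi - b \<in> {-pi<..pi}" using assms(2-5) by auto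
  ultimately show ?thesis by simp
qed

lemma cis_angle_in_window: "\<exists>\<theta>. c \<le> \<theta> \<and> \<theta> < c + 2 * pi \<and> cis \<theta> = cis \<phi>"
proof -
  define \<theta> where "\<theta> = c + pi - normalize_angle (c + pi - \<phi>)"
  have "cis \<theta> = cis \<phi>"
    unfolding \<theta>_def by (simp add: cis_divide[symmetric])
  moreover have "c \<le> \<theta>" "\<theta> < c + 2 * pi"
    using normalize_angle_normalized[of "c + pi - \<phi>"] unfolding \<theta>_def by auto
  ultimately show ?thesis by blast
qed

lemma centered_interval_exists:
  fixes a \<theta> :: real
  assumes "0 < a" "- a \<le> \<theta>" "\<theta> < (2 * real N - 1) * a"
  shows "\<exists>j<N. (2 * real j - 1) * a \<le> \<theta> \<and> \<theta> < (2 * real j + 1) * a"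
proof -
  define j where "j = nat \<lfloor>(\<theta> / a + 1) / 2\<rfloor>"
  have "0 \<le> (\<theta> / a + 1) / 2" using assms by (simp add: field_simps)
  hence j: "real j \<le> (\<theta> / a + 1) / 2" "(\<theta> / a + 1) / 2 < real j + 1"
    unfolding j_def by linarith+
  have "(\<theta> / a + 1) / 2 < real N" using assms by (simp add: field_simps)
  hence "real j < real N" using j by linarith
  hence "j < N" by simp
  moreover have "(2 * real j - 1) * a \<le> \<theta>" "\<theta> < (2 * real j + 1) * a"
    using j assms(1) by (simp_all add: field_simps)
  ultimately show ?thesis by blast
qed

lemma centered_interval_le:
  fixes a \<theta> :: real
  assumes "0 < a" "(2 * real i - 1) * a \<le> \<theta>" "\<theta> < (2 * real j + 1) * a"
  shows "i \<le> j"
proof -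
  have "2 * real i - 1 < 2 * real j + 1"
    using assms mult_less_cancel_right_pos[OF assms(1)] by fastforce
  thus ?thesis by linarith
qed

section \<open>The Hastings--Luecking sets partition the disk\<close>

lemma dyadic_annulus_exists:
  fixes r :: real
  assumes "0 \<le> r" "r < 1"
  shows "\<exists>n. 1 - 1 / 2 ^ n \<le> r \<and> r < 1 - 1 / 2 ^ (n + 1)"
proof -
  obtain N where N: "(1 / 2) ^ N < 1 - r"
    using real_arch_pow_inv[of "1 - r" "1 / 2"] assms(2) by auto
  have "(1 / 2 :: real) ^ (N + 1) \<le> (1 / 2) ^ N" by (rule power_decreasing) auto
  hence ex: "r < 1 - 1 / 2 ^ (N + 1)" using N by (simp add: power_one_over)
  define n where "n = (LEAST n. r < 1 - 1 / (2::real) ^ (n + 1))"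
  have "r < 1 - 1 / 2 ^ (n + 1)" unfolding n_def by (rule LeastI[of _ N]) (rule ex)
  moreover have "1 - 1 / 2 ^ n \<le> r"
  proof (cases n)
    case (Suc m)
    have "\<not> r < 1 - 1 / 2 ^ (m + 1)"
      using not_less_Least[of m "\<lambda>n. r < 1 - 1 / (2::real) ^ (n + 1)"] Suc n_def by simp
    thus ?thesis using Suc by simp
  qed (simp add: assms(1))
  ultimately show ?thesis by blast
qed

lemma dyadic_annulus_unique:
  fixes r :: real
  assumes "1 - 1 / 2 ^ n \<le> r" "r < 1 - 1 / 2 ^ (n + 1)"
    and "1 - 1 / 2 ^ m \<le> r" "r < 1 - 1 / 2 ^ (m + 1)"
  shows "n = m"
proof -
  have "a \<ge> b" if "1 - 1 / 2 ^ b \<le> r" "r < 1 - 1 / 2 ^ (a + 1)" for a b :: nat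
  proof (rule ccontr)
    assume "\<not> b \<le> a"
    hence "(2::real) ^ (a + 1) \<le> 2 ^ b" by (intro power_increasing) auto
    hence "1 / (2::real) ^ b \<le> 1 / 2 ^ (a + 1)" by (intro divide_left_mono) auto
    thus False using that by linarith
  qed
  thus ?thesis using assms by (meson le_antisym)
qed

lemma dyadic_sector_exists:
  "\<exists>j<2 ^ n. \<exists>\<theta>. (2 * real j - 1) * pi / 2 ^ n \<le> \<theta> \<and> \<theta> < (2 * real j + 1) * pi / 2 ^ n \<and>
     z = complex_of_real (cmod z) * cis \<theta>"
proof -
  define a :: real where "a = pi / 2 ^ n"
  have "0 < a" unfolding a_def by simp
  obtain \<theta> where \<theta>: "- a \<le> \<theta>" "\<theta> < - a + 2 * pi" "cis \<theta> = cis (Arg z)"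
    using cis_angle_in_window by blast
  have "- a + 2 * pi = (2 * real (2 ^ n :: nat) - 1) * a" unfolding a_def by (simp add: field_simps)
  with \<theta>(2) have "\<theta> < (2 * real (2 ^ n :: nat) - 1) * a" by simp
  from centered_interval_exists[OF \<open>0 < a\<close> \<theta>(1) this]
  obtain j where "j < 2 ^ n" "(2 * real j - 1) * a \<le> \<theta>" "\<theta> < (2 * real j + 1) * a" by blast
  moreover have "z = complex_of_real (cmod z) * cis \<theta>"
    using \<theta>(3) rcis_cmod_Arg[of z] by (simp add: rcis_def)
  ultimately show ?thesis unfolding a_def times_divide_eq_right by blast
qed

lemma dyadic_sector_unique:
  assumes "z \<noteq> 0" "j < 2 ^ n" "j' < 2 ^ n"
    and "(2 * real j - 1) * pi / 2 ^ n \<le> \<theta>" "\<theta> < (2 * real j + 1) * pi / 2 ^ n"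
      "z = complex_of_real (cmod z) * cis \<theta>"
    and "(2 * real j' - 1) * pi / 2 ^ n \<le> \<theta>'" "\<theta>' < (2 * real j' + 1) * pi / 2 ^ n"
      "z = complex_of_real (cmod z) * cis \<theta>'"
  shows "j = j'"
proof -
  define a :: real where "a = pi / 2 ^ n"
  have "0 < a" unfolding a_def by simp
  have j: "(2 * real j - 1) * a \<le> \<theta>" "\<theta> < (2 * real j + 1) * a"
    and j': "(2 * real j' - 1) * a \<le> \<theta>'" "\<theta>' < (2 * real j' + 1) * a"
    using assms(4,5,7,8) by (simp_all only: a_def times_divide_eq_right)
  have in_window: "- a \<le> x \<and> x < - a + 2 * pi"
    if "(2 * real i - 1) * a \<le> x" "x < (2 * real i + 1) * a" "i < 2 ^ n" for i x
  proof -
    have "real (Suc i) \<le> real (2 ^ n)" using that(3) by (simp only: of_nat_le_iff Suc_le_eq)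
    hence "(2 * real i + 1) * a \<le> (2 * 2 ^ n - 1) * a" using \<open>0 < a\<close> by (intro mult_right_mono) auto
    also have "\<dots> = - a + 2 * pi" unfolding a_def by (simp add: field_simps)
    finally have "x < - a + 2 * pi" using that(2) by linarith
    moreover have "- a \<le> (2 * real i - 1) * a" using \<open>0 < a\<close> by (simp add: algebra_simps)
    ultimately show ?thesis using that(1) by linarith
  qed
  have "cis \<theta> = cis \<theta>'"
    using assms(1,6,9) by (metis mult_cancel_left of_real_eq_0_iff norm_eq_zero)
  hence "\<theta> = \<theta>'"
    using in_window[OF j assms(2)] in_window[OF j' assms(3)] by (intro cis_eq_imp_eq_in_window) auto
  hence "j \<le> j'" "j' \<le> j"
    using centered_interval_le[OF \<open>0 < a\<close> j(1)] centered_interval_le[OF \<open>0 < a\<close> j'(1)] j(2) j'(2)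
    by simp_all
  thus ?thesis by simp
qed

lemma HL_Delta_cover: assumes "cmod z < 1" shows "\<exists>k. z \<in> HL_Delta k"
proof -
  obtain n where n: "1 - 1 / 2 ^ n \<le> cmod z" "cmod z < 1 - 1 / 2 ^ (n + 1)"
    using dyadic_annulus_exists[OF norm_ge_zero assms] by blast
  obtain j where j: "j < 2 ^ n" and "\<exists>\<theta>. (2 * real j - 1) * pi / 2 ^ n \<le> \<theta> \<and>
      \<theta> < (2 * real j + 1) * pi / 2 ^ n \<and> z = complex_of_real (cmod z) * cis \<theta>"
    using dyadic_sector_exists by blast
  hence "z \<in> HL_Delta (2 ^ n + j - 1)"
    using n unfolding HL_Delta_def Let_def hl_n_index[OF j] hl_j_index[OF j] by blast
  thus ?thesis by blast
qed

lemma HL_Delta_disjoint: assumes "z \<in> HL_Delta k" "z \<in> HL_Delta k'" shows "k = k'"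
proof -
  obtain \<theta> where A: "1 - 1 / 2 ^ hl_n k \<le> cmod z" "cmod z < 1 - 1 / 2 ^ (hl_n k + 1)"
    "(2 * real (hl_j k) - 1) * pi / 2 ^ hl_n k \<le> \<theta>" "\<theta> < (2 * real (hl_j k) + 1) * pi / 2 ^ hl_n k"
    "z = complex_of_real (cmod z) * cis \<theta>"
    using assms(1) unfolding HL_Delta_def Let_def by blast
  obtain \<theta>' where B: "1 - 1 / 2 ^ hl_n k' \<le> cmod z" "cmod z < 1 - 1 / 2 ^ (hl_n k' + 1)"
    "(2 * real (hl_j k') - 1) * pi / 2 ^ hl_n k' \<le> \<theta>'" "\<theta>' < (2 * real (hl_j k') + 1) * pi / 2 ^ hl_n k'"
    "z = complex_of_real (cmod z) * cis \<theta>'"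
    using assms(2) unfolding HL_Delta_def Let_def by blast
  have n: "hl_n k = hl_n k'" using dyadic_annulus_unique[OF A(1,2) B(1,2)] .
  have "hl_j k = hl_j k'"
  proof (cases "z = 0")
    case True
    hence "(2::real) ^ hl_n k \<le> 1" using A(1) by (simp add: field_simps)
    hence "hl_n k = 0" by (simp add: power_le_one_iff)
    thus ?thesis using hl_j_less[of k] hl_j_less[of k'] n by simp
  next
    case False
    show ?thesis
      by (rule dyadic_sector_unique[OF False hl_j_less _ A(3-5)]) (use hl_j_less[of k'] B(3-5) n in auto)
  qed
  thus ?thesis using hl_index_eq[of k] hl_index_eq[of k'] n by metis
qed

lemma HL_Delta_subset_ball: "HL_Delta k \<subseteq> ball 0 1"
  using hl_size_pos[of k] by (auto simp: HL_Delta_iff)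

section \<open>Measurability\<close>

lemma sets_area_measure [simp]: "sets area_measure = sets borel"
  unfolding area_measure_def by simp

lemma borel_measurable_sgn: "(sgn :: complex \<Rightarrow> complex) \<in> borel_measurable borel"
  unfolding sgn_div_norm by measurable

lemma closed_arc_borel: "cis ` {a..b} \<in> sets borel"
proof -
  have "compact (cis ` {a..b})"
    by (intro compact_continuous_image continuous_intros) simp
  thus ?thesis by (simp add: compact_imp_closed)
qed

lemma arc_borel: "cis ` {a..<b} \<in> sets borel"
proof -
  have "{a..<b} = (\<Union>m. {a..b - 1 / Suc m})"
  proof (intro equalityI subsetI)
    fix x assume x: "x \<in> {a..<b}"
    then obtain m where "inverse (real (Suc m)) < b - x" using reals_Archimedean[of "b - x"] by auto
    hence "x \<le> b - 1 / Suc m" by (simp add: inverse_eq_divide)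
    thus "x \<in> (\<Union>m. {a..b - 1 / Suc m})" using x by (intro UN_I[of m]) auto
  next
    fix x assume "x \<in> (\<Union>m. {a..b - 1 / Suc m})"
    then obtain m where "a \<le> x" "x \<le> b - 1 / Suc m" by auto
    moreover have "0 < 1 / real (Suc m)" by simp
    ultimately show "x \<in> {a..<b}" unfolding atLeastLessThan_iff by linarith
  qed
  hence "cis ` {a..<b} = (\<Union>m. cis ` {a..b - 1 / Suc m})" by auto
  thus ?thesis using closed_arc_borel by auto
qed

lemma polar_form_iff: "z = complex_of_real (cmod z) * cis \<theta> \<longleftrightarrow> z = 0 \<or> sgn z = cis \<theta>"
proof (cases "z = 0")
  case False
  have "sgn (complex_of_real (cmod z) * cis \<theta>) = cis \<theta>"
    using False by (simp add: sgn_mult sgn_of_real)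
  moreover have "z = complex_of_real (cmod z) * sgn z"
    using False rcis_cmod_Arg[of z] by (simp add: rcis_def cis_Arg)
  ultimately show ?thesis using False by metis
qed simp

lemma HL_Delta_borel: "HL_Delta k \<in> sets borel"
proof -
  define a where "a = hl_arg k - pi * hl_size k"
  define b where "b = hl_arg k + pi * hl_size k"
  have "a < b" unfolding a_def b_def using hl_size_pos[of k] by simp
  hence "HL_Delta k = {z. 1 - hl_size k \<le> cmod z} \<inter> {z. cmod z < 1 - hl_size k / 2} \<inter>
      ({0} \<union> sgn -` cis ` {a..<b})"
    unfolding set_eq_iff HL_Delta_iff a_def[symmetric] b_def[symmetric] polar_form_iff by force
  also have "\<dots> \<in> sets borel"
  proof -
    have "sgn -` cis ` {a..<b} \<in> sets borel"
      using measurable_sets[OF borel_measurable_sgn arc_borel[of a b]] by simp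
    moreover have "{z::complex. 1 - hl_size k \<le> cmod z} \<in> sets borel"
      "{z::complex. cmod z < 1 - hl_size k / 2} \<in> sets borel" by measurable
    ultimately show ?thesis by auto
  qed
  finally show ?thesis .
qed

lemma W_box_borel:
  assumes "0 < s" "s < 1" "\<xi> \<noteq> 0"
  shows "W_box \<xi> s \<in> sets borel"
proof -
  have Arg_le_iff: "\<bar>Arg w\<bar> \<le> pi * s \<longleftrightarrow> sgn w \<in> cis ` {- (pi * s)..pi * s}" if "w \<noteq> 0" for w
  proof
    assume "\<bar>Arg w\<bar> \<le> pi * s"
    thus "sgn w \<in> cis ` {- (pi * s)..pi * s}"
      using cis_Arg[OF that] by (intro image_eqI[of _ _ "Arg w"]) auto
  next
    assume "sgn w \<in> cis ` {- (pi * s)..pi * s}"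
    then obtain \<theta> where \<theta>: "\<theta> \<in> {- (pi * s)..pi * s}" "sgn w = cis \<theta>" by auto
    have "pi * s < pi" "- (pi * s) \<le> \<theta>" "\<theta> \<le> pi * s" using assms \<theta>(1) by auto
    hence "Arg w = \<theta>" by (intro cis_Arg_unique[OF \<theta>(2)]) linarith+
    thus "\<bar>Arg w\<bar> \<le> pi * s" using \<theta> by auto
  qed
  have "W_box \<xi> s = ball 0 1 \<inter> {z. 1 - s \<le> cmod z} \<inter>
      ((\<lambda>z. sgn (z * cnj \<xi>)) -` cis ` {- (pi * s)..pi * s})" (is "_ = ?rhs")
  proof (intro set_eqI)
    fix z
    show "z \<in> W_box \<xi> s \<longleftrightarrow> z \<in> ?rhs"
    proof (cases "1 - s \<le> cmod z")
      case True
      hence "z * cnj \<xi> \<noteq> 0" using assms by auto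
      thus ?thesis by (simp add: W_box_def Arg_le_iff)
    qed (simp add: W_box_def)
  qed
  also have "\<dots> \<in> sets borel"
  proof -
    have "(\<lambda>z. sgn (z * cnj \<xi>)) \<in> borel_measurable borel"
      using measurable_compose[OF _ borel_measurable_sgn, of "\<lambda>z. z * cnj \<xi>" borel] by measurable
    from measurable_sets[OF this closed_arc_borel]
    have "(\<lambda>z. sgn (z * cnj \<xi>)) -` cis ` {- (pi * s)..pi * s} \<in> sets borel" by simp
    moreover have "{z::complex. 1 - s \<le> cmod z} \<in> sets borel" by measurable
    ultimately show ?thesis by auto
  qed
  finally show ?thesis .
qed

lemma sets_restrict_ballI:
  assumes "sets \<mu> = sets (restrict_space borel (ball (0::complex) 1))"
    and "X \<in> sets borel" "X \<subseteq> ball 0 1"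
  shows "X \<in> sets \<mu>"
  using assms by (simp add: sets_restrict_space_iff)

section \<open>Carleson boxes\<close>

lemma HL_Delta_subset_W_box:
  assumes "hl_size k \<le> 1 / 2"
  shows "HL_Delta k \<subseteq> W_box (cis (hl_arg k)) (hl_size k)"
proof
  fix z assume "z \<in> HL_Delta k"
  then obtain \<theta> where z: "1 - hl_size k \<le> cmod z" "cmod z < 1 - hl_size k / 2"
      "hl_arg k - pi * hl_size k \<le> \<theta>" "\<theta> < hl_arg k + pi * hl_size k"
      "z = complex_of_real (cmod z) * cis \<theta>"
    unfolding HL_Delta_iff by blast
  have "z * cnj (cis (hl_arg k)) = rcis (cmod z) (\<theta> - hl_arg k)"
    by (subst z(5)) (simp add: rcis_def cis_cnj cis_mult mult.assoc)
  moreover have "pi * hl_size k \<le> pi / 2" using mult_left_mono[OF assms, of pi] by simp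
  hence "\<theta> - hl_arg k \<in> {-pi<..pi}"
    using z(3,4) pi_gt_zero unfolding greaterThanAtMost_iff by linarith
  moreover have "0 < cmod z" using z(1) assms by linarith
  ultimately have "Arg (z * cnj (cis (hl_arg k))) = \<theta> - hl_arg k" by (simp add: Arg_rcis)
  thus "z \<in> W_box (cis (hl_arg k)) (hl_size k)"
    using z(1-4) hl_size_pos[of k] by (auto simp: W_box_def)
qed

lemma rho_le_K2:
  assumes "0 < s" "s < H"
  shows "rho \<mu> s \<le> K2 \<mu> H * ennreal (s ^ 2)"
proof -
  have "rho \<mu> s / ennreal (s ^ 2) \<le> K2 \<mu> H"
    unfolding K2_def by (rule SUP_upper) (use assms in auto)
  hence "rho \<mu> s / ennreal (s ^ 2) * ennreal (s ^ 2) \<le> K2 \<mu> H * ennreal (s ^ 2)"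
    by (rule mult_right_mono) simp
  thus ?thesis using assms by (simp add: ennreal_divide_times)
qed

lemma emeasure_HL_Delta_le_K2:
  assumes "sets \<mu> = sets (restrict_space borel (ball 0 1))"
    and "hl_size k \<le> 1 / 2" "hl_size k < H"
  shows "emeasure \<mu> (HL_Delta k) \<le> K2 \<mu> H * ennreal (hl_size k ^ 2)"
proof -
  let ?W = "W_box (cis (hl_arg k)) (hl_size k)"
  have "?W \<in> sets \<mu>"
    using assms(2) hl_size_pos[of k]
    by (intro sets_restrict_ballI[OF assms(1)] W_box_borel) (auto simp: W_box_def)
  hence "emeasure \<mu> (HL_Delta k) \<le> emeasure \<mu> ?W"
    by (rule emeasure_mono[OF HL_Delta_subset_W_box[OF assms(2)]])
  also have "\<dots> \<le> rho \<mu> (hl_size k)" unfolding rho_def by (rule SUP_upper) simp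
  also have "\<dots> \<le> K2 \<mu> H * ennreal (hl_size k ^ 2)" by (rule rho_le_K2[OF hl_size_pos assms(3)])
  finally show ?thesis .
qed

section \<open>A lower bound for the area of the Hastings--Luecking sets\<close>

lemma emeasure_area_measure_ball:
  assumes "0 \<le> r"
  shows "emeasure area_measure (ball c r) = ennreal (r ^ 2)"
proof -
  have "emeasure area_measure (ball c r) = ennreal (1 / pi) * emeasure lborel (ball c r)"
    unfolding area_measure_def by (subst emeasure_density) (auto intro: nn_integral_cmult_indicator)
  also have "emeasure lborel (ball c r) = ennreal (pi * r ^ 2)"
    using emeasure_ball[OF assms, of c] by (simp add: eval_unit_ball_vol)
  also have "ennreal (1 / pi) * ennreal (pi * r ^ 2) = ennreal (r ^ 2)"
    by (subst ennreal_mult'[symmetric]) auto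
  finally show ?thesis .
qed

lemma ball_polar_bounds:
  assumes "0 < r" "r < R" "z \<in> ball (complex_of_real R * cis \<phi>) r"
  shows "R - r < cmod z \<and> cmod z < R + r \<and>
    (\<exists>\<theta>. \<bar>\<theta> - \<phi>\<bar> \<le> r / (R - r) \<and> z = complex_of_real (cmod z) * cis \<theta>)"
proof -
  define w where "w = z * cis (- \<phi>)"
  have "w - complex_of_real R = (z - complex_of_real R * cis \<phi>) * cis (- \<phi>)"
    unfolding w_def by (simp add: algebra_simps cis_mult)
  hence dist_w: "cmod (w - complex_of_real R) < r"
    using assms(3) by (simp add: norm_mult dist_norm norm_minus_commute)
  have norm_w: "cmod z = cmod w" unfolding w_def by (simp add: norm_mult)
  have "cmod w < R + r" using dist_w norm_triangle_ineq2[of w "complex_of_real R"] assms by simp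
  moreover have "R - r < cmod w"
    using dist_w norm_triangle_ineq3[of w "complex_of_real R"] assms(2) by (smt (verit) norm_of_real)
  moreover have "\<bar>Arg w\<bar> \<le> r / (R - r)"
  proof -
    have Re_w: "R - r < Re w" and Im_w: "\<bar>Im w\<bar> < r"
      using dist_w abs_Re_le_cmod[of "w - complex_of_real R"] abs_Im_le_cmod[of "w - complex_of_real R"]
      by auto
    hence "0 < Re w" using assms by linarith
    hence "\<bar>Arg w\<bar> = \<bar>arctan (Im w / Re w)\<bar>" by (simp add: arg_conv_arctan)
    also have "\<dots> \<le> \<bar>Im w\<bar> / Re w" using abs_arctan_le[of "Im w / Re w"] \<open>0 < Re w\<close> by simp
    also have "\<dots> \<le> r / (R - r)" using Re_w Im_w assms by (intro frac_le) auto
    finally show ?thesis .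
  qed
  moreover have "z = complex_of_real (cmod z) * cis (Arg w + \<phi>)"
  proof -
    have "z = w * cis \<phi>" unfolding w_def by (simp add: cis_mult)
    also have "\<dots> = complex_of_real (cmod w) * cis (Arg w) * cis \<phi>"
      using rcis_cmod_Arg[of w] by (simp add: rcis_def)
    finally show ?thesis using norm_w by (simp add: cis_mult mult.assoc)
  qed
  ultimately show ?thesis using norm_w by (intro conjI exI[of _ "Arg w + \<phi>"]) auto
qed

text \<open>Four disjoint disks of radius \<open>s/4\<close> centred on the middle circle \<open>|z| = 1 - 3s/4\<close> of
  \<open>\<Delta>\<^sub>k\<close>, at angular spacing \<open>6s/5\<close>, where \<open>s = hl_size k\<close>: they give \<open>\<A>(\<Delta>\<^sub>k) \<ge> s\<^sup>2/4\<close>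
  without computing the area of a polar rectangle.\<close>

definition hl_disk :: "nat \<Rightarrow> nat \<Rightarrow> complex set" where
  "hl_disk k i = ball (complex_of_real (1 - 3 * hl_size k / 4) *
      cis (hl_arg k + (6 * real i - 9) * hl_size k / 5)) (hl_size k / 4)"

lemma hl_disk_polar:
  assumes "hl_size k \<le> 1 / 2" "i < 4" "z \<in> hl_disk k i"
  shows "1 - hl_size k < cmod z \<and> cmod z < 1 - hl_size k / 2 \<and>
    (\<exists>\<theta>. \<bar>\<theta> - (hl_arg k + (6 * real i - 9) * hl_size k / 5)\<bar> \<le> hl_size k / 2 \<and>
         \<bar>\<theta> - hl_arg k\<bar> \<le> 23 * hl_size k / 10 \<and> z = complex_of_real (cmod z) * cis \<theta>)"
proof -
  define s where "s = hl_size k"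
  have s: "0 < s" "s \<le> 1 / 2" using hl_size_pos assms(1) unfolding s_def by auto
  have "0 < s / 4" "s / 4 < 1 - 3 * s / 4" using s by auto
  moreover have "z \<in> ball (complex_of_real (1 - 3 * s / 4) * cis (hl_arg k + (6 * real i - 9) * s / 5)) (s / 4)"
    using assms(3) unfolding hl_disk_def s_def .
  ultimately obtain \<theta> where z: "1 - 3 * s / 4 - s / 4 < cmod z" "cmod z < 1 - 3 * s / 4 + s / 4"
      "\<bar>\<theta> - (hl_arg k + (6 * real i - 9) * s / 5)\<bar> \<le> s / 4 / (1 - 3 * s / 4 - s / 4)"
      "z = complex_of_real (cmod z) * cis \<theta>"
    using ball_polar_bounds by blast
  have "s / 4 / (1 - 3 * s / 4 - s / 4) \<le> s / 2" using s by (simp add: field_simps)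
  hence \<theta>: "\<bar>\<theta> - (hl_arg k + (6 * real i - 9) * s / 5)\<bar> \<le> s / 2" using z(3) by linarith
  have "\<bar>6 * real i - 9\<bar> \<le> 9" using assms(2) by auto
  hence "\<bar>(6 * real i - 9) * s / 5\<bar> \<le> 9 * s / 5" using s by (simp add: abs_mult mult_right_mono)
  hence "\<bar>\<theta> - hl_arg k\<bar> \<le> 23 * s / 10" using \<theta> by linarith
  moreover have "1 - s < cmod z" "cmod z < 1 - s / 2" using z(1,2) by linarith+
  ultimately show ?thesis using z(4) \<theta> unfolding s_def by blast
qed

lemma hl_disk_subset_HL_Delta:
  assumes "hl_size k \<le> 1 / 2" "i < 4"
  shows "hl_disk k i \<subseteq> HL_Delta k"
proof
  fix z assume "z \<in> hl_disk k i"
  from hl_disk_polar[OF assms this] obtain \<theta> where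
    z: "1 - hl_size k < cmod z" "cmod z < 1 - hl_size k / 2" "\<bar>\<theta> - hl_arg k\<bar> \<le> 23 * hl_size k / 10"
      "z = complex_of_real (cmod z) * cis \<theta>"
    by blast
  have "23 * hl_size k / 10 < pi * hl_size k" using pi_gt3 hl_size_pos[of k] by simp
  hence "hl_arg k - pi * hl_size k \<le> \<theta>" "\<theta> < hl_arg k + pi * hl_size k"
    using abs_le_D1[OF z(3)] abs_le_D2[OF z(3)] by linarith+
  thus "z \<in> HL_Delta k" using z(1,2,4) unfolding HL_Delta_iff by auto
qed

lemma hl_disks_disjoint:
  assumes "hl_size k \<le> 1 / 2"
  shows "disjoint_family_on (hl_disk k) {..<4}"
proof (unfold disjoint_family_on_def, intro ballI impI equalityI subsetI)
  fix i i' z assume i: "i \<in> {..<4}" "i' \<in> {..<4}" "i \<noteq> i'" and z: "z \<in> hl_disk k i \<inter> hl_disk k i'"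
  define s where "s = hl_size k"
  have s: "0 < s" "s \<le> 1 / 2" using hl_size_pos assms unfolding s_def by auto
  obtain \<theta> where \<theta>: "1 - s < cmod z" "\<bar>\<theta> - (hl_arg k + (6 * real i - 9) * s / 5)\<bar> \<le> s / 2"
      "\<bar>\<theta> - hl_arg k\<bar> \<le> 23 * s / 10" "z = complex_of_real (cmod z) * cis \<theta>"
    using hl_disk_polar[OF assms, of i z] i z unfolding s_def by auto
  obtain \<theta>' where \<theta>': "\<bar>\<theta>' - (hl_arg k + (6 * real i' - 9) * s / 5)\<bar> \<le> s / 2"
      "\<bar>\<theta>' - hl_arg k\<bar> \<le> 23 * s / 10" "z = complex_of_real (cmod z) * cis \<theta>'"
    using hl_disk_polar[OF assms, of i' z] i z unfolding s_def by auto
  have "z \<noteq> 0" using \<theta>(1) s by auto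
  hence "cis \<theta> = cis \<theta>'" using \<theta>(4) \<theta>'(3) by (metis mult_cancel_left of_real_eq_0_iff norm_eq_zero)
  moreover have "46 * s / 10 < 2 * pi" using s pi_gt3 by linarith
  ultimately have "\<theta> = \<theta>'"
    using abs_le_D1[OF \<theta>(3)] abs_le_D2[OF \<theta>(3)] abs_le_D1[OF \<theta>'(2)] abs_le_D2[OF \<theta>'(2)]
    by (intro cis_eq_imp_eq_in_window[of _ _ "hl_arg k - 23 * s / 10"]) linarith+
  hence "\<bar>(6 * real i - 9) * s / 5 - (6 * real i' - 9) * s / 5\<bar> \<le> s"
    using abs_le_D1[OF \<theta>(2)] abs_le_D2[OF \<theta>(2)] abs_le_D1[OF \<theta>'(1)] abs_le_D2[OF \<theta>'(1)]
    by (intro abs_leI) linarith+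
  moreover have "(6 * real i - 9) * s / 5 - (6 * real i' - 9) * s / 5 = 6 * (real i - real i') * s / 5"
    by (simp add: field_simps)
  moreover have "1 \<le> \<bar>real i - real i'\<bar>" using i(3) by linarith
  hence "6 * s / 5 \<le> \<bar>6 * (real i - real i') * s / 5\<bar>" using s by (simp add: abs_mult mult_right_mono)
  ultimately show "z \<in> {}" using s by linarith
qed simp

lemma emeasure_area_HL_Delta_ge:
  assumes "hl_size k \<le> 1 / 2"
  shows "ennreal (hl_size k ^ 2 / 4) \<le> emeasure area_measure (HL_Delta k)"
proof -
  have "ennreal (hl_size k ^ 2 / 4) = ennreal 4 * ennreal ((hl_size k / 4) ^ 2)"
    by (subst ennreal_mult[symmetric]) (auto simp: power2_eq_square)
  also have "\<dots> = (\<Sum>i<4::nat. ennreal ((hl_size k / 4) ^ 2))" by simp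
  also have "\<dots> = (\<Sum>i<4. emeasure area_measure (hl_disk k i))"
    using hl_size_pos[of k] by (simp add: hl_disk_def emeasure_area_measure_ball)
  also have "\<dots> = emeasure area_measure (\<Union>i<4. hl_disk k i)"
    by (rule sum_emeasure[OF _ hl_disks_disjoint[OF assms]]) (auto simp: hl_disk_def)
  also have "\<dots> \<le> emeasure area_measure (HL_Delta k)"
    using hl_disk_subset_HL_Delta[OF assms] HL_Delta_borel by (intro emeasure_mono) auto
  finally show ?thesis .
qed

lemma emeasure_HL_Delta_le_area:
  assumes "sets \<mu> = sets (restrict_space borel (ball 0 1))"
    and "hl_size k \<le> 1 / 2" "hl_size k < H"
  shows "emeasure \<mu> (HL_Delta k) \<le> 4 * K2 \<mu> H * emeasure area_measure (HL_Delta k)"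
proof -
  have "emeasure \<mu> (HL_Delta k) \<le> K2 \<mu> H * ennreal (hl_size k ^ 2)"
    by (rule emeasure_HL_Delta_le_K2[OF assms])
  also have "ennreal (hl_size k ^ 2) = ennreal 4 * ennreal (hl_size k ^ 2 / 4)"
    by (subst ennreal_mult[symmetric]) auto
  also have "K2 \<mu> H * (ennreal 4 * ennreal (hl_size k ^ 2 / 4)) = 4 * K2 \<mu> H * ennreal (hl_size k ^ 2 / 4)"
    by (simp add: mult_ac)
  also have "\<dots> \<le> 4 * K2 \<mu> H * emeasure area_measure (HL_Delta k)"
    by (rule mult_left_mono[OF emeasure_area_HL_Delta_ge[OF assms(2)]]) simp
  finally show ?thesis .
qed

section \<open>The majorant \<open>\<Lambda>\<^sub>f\<close>\<close>

lemma Lambda_eq: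
  assumes "z \<in> HL_Delta k"
  shows "Lambda f z = (SUP w\<in>HL_Delta k. cmod (f w))"
proof -
  have "(\<lambda>i. (SUP w\<in>HL_Delta i. cmod (f w)) * indicator (HL_Delta i) z) =
      (\<lambda>i. if i = k then (SUP w\<in>HL_Delta i. cmod (f w)) else 0)"
  proof
    fix i
    show "(SUP w\<in>HL_Delta i. cmod (f w)) * indicator (HL_Delta i) z =
        (if i = k then (SUP w\<in>HL_Delta i. cmod (f w)) else 0)"
      using assms HL_Delta_disjoint[OF assms, of i] by (cases "i = k") (auto simp: indicator_def)
  qed
  hence "Lambda f z = (\<Sum>i. if i = k then (SUP w\<in>HL_Delta i. cmod (f w)) else 0)"
    unfolding Lambda_def by (simp only:)
  also have "\<dots> = (SUP w\<in>HL_Delta k. cmod (f w))" by (rule sums_unique[OF sums_single, symmetric])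
  finally show ?thesis .
qed

lemma Lambda_superlevel_eq:
  assumes "0 \<le> t"
  shows "{z. t < Lambda f z} = (\<Union>k\<in>{k. t < (SUP w\<in>HL_Delta k. cmod (f w))}. HL_Delta k)"
proof (intro set_eqI iffI)
  fix z assume z: "z \<in> {z. t < Lambda f z}"
  have "\<exists>k. z \<in> HL_Delta k"
  proof (rule ccontr)
    assume "\<nexists>k. z \<in> HL_Delta k"
    hence "Lambda f z = 0" by (simp add: Lambda_def)
    thus False using z assms by simp
  qed
  then obtain k where k: "z \<in> HL_Delta k" by blast
  hence "t < (SUP w\<in>HL_Delta k. cmod (f w))" using z by (simp add: Lambda_eq)
  thus "z \<in> (\<Union>k\<in>{k. t < (SUP w\<in>HL_Delta k. cmod (f w))}. HL_Delta k)" using k by blast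
next
  fix z assume "z \<in> (\<Union>k\<in>{k. t < (SUP w\<in>HL_Delta k. cmod (f w))}. HL_Delta k)"
  then obtain k where "z \<in> HL_Delta k" "t < (SUP w\<in>HL_Delta k. cmod (f w))" by blast
  thus "z \<in> {z. t < Lambda f z}" by (simp add: Lambda_eq)
qed

lemma Lambda_superlevel_borel:
  assumes "0 \<le> t"
  shows "{z. t < Lambda f z} \<in> sets borel"
  unfolding Lambda_superlevel_eq[OF assms] by (intro sets.countable_UN') (auto intro: HL_Delta_borel)

lemma bdd_above_norm_HL_Delta:
  assumes "continuous_on (ball 0 1) f"
  shows "bdd_above ((\<lambda>w. cmod (f w)) ` HL_Delta k)"
proof -
  have "HL_Delta k \<subseteq> cball 0 (1 - hl_size k / 2)" by (auto simp: HL_Delta_iff)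
  moreover have "cball 0 (1 - hl_size k / 2) \<subseteq> ball 0 1" using hl_size_pos[of k] by auto
  hence "compact (f ` cball 0 (1 - hl_size k / 2))"
    by (intro compact_continuous_image continuous_on_subset[OF assms]) auto
  hence "bounded (f ` cball 0 (1 - hl_size k / 2))" by (rule compact_imp_bounded)
  ultimately show ?thesis unfolding bdd_above_def bounded_iff by fast
qed

lemma emeasure_le_by_disjoint_cover:
  fixes A :: "nat \<Rightarrow> 'a set"
  assumes "E \<subseteq> (\<Union>k. A k)" "(\<Union>k. A k) \<subseteq> F" "F \<in> sets \<nu>"
    and "\<And>k. A k \<in> sets \<mu>" "\<And>k. A k \<in> sets \<nu>" "disjoint_family A"
    and "\<And>k. emeasure \<mu> (A k) \<le> c * emeasure \<nu> (A k)"
  shows "emeasure \<mu> E \<le> c * emeasure \<nu> F"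
proof -
  have "emeasure \<mu> E \<le> emeasure \<mu> (\<Union>k. A k)" using assms(1,4) by (intro emeasure_mono) auto
  also have "\<dots> \<le> (\<Sum>k. emeasure \<mu> (A k))"
    using assms(4) by (intro emeasure_subadditive_countably) auto
  also have "\<dots> \<le> (\<Sum>k. c * emeasure \<nu> (A k))" by (intro suminf_le assms(7)) auto
  also have "\<dots> = c * emeasure \<nu> (\<Union>k. A k)"
  proof -
    have "range A \<subseteq> sets \<nu>" using assms(5) by auto
    from suminf_emeasure[OF this assms(6)] show ?thesis by simp
  qed
  also have "\<dots> \<le> c * emeasure \<nu> F" using assms(2,3) by (intro mult_left_mono emeasure_mono) auto
  finally show ?thesis .
qed

lemma boundary_superlevel_subset:
  assumes "continuous_on (ball 0 1) f"
  shows "{z \<in> ball 0 1. 1 - h < cmod z \<and> t < cmod (f z)} \<subseteq>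
    (\<Union>k\<in>{k. t < (SUP w\<in>HL_Delta k. cmod (f w)) \<and> hl_size k < 2 * h}. HL_Delta k)"
proof
  fix z assume z: "z \<in> {z \<in> ball 0 1. 1 - h < cmod z \<and> t < cmod (f z)}"
  then obtain k where k: "z \<in> HL_Delta k" using HL_Delta_cover by auto
  have "cmod (f z) \<le> (SUP w\<in>HL_Delta k. cmod (f w))"
    by (rule cSUP_upper[OF k bdd_above_norm_HL_Delta[OF assms]])
  moreover have "cmod z < 1 - hl_size k / 2" using k by (simp add: HL_Delta_iff)
  ultimately have "t < (SUP w\<in>HL_Delta k. cmod (f w)) \<and> hl_size k < 2 * h" using z by auto
  thus "z \<in> (\<Union>k\<in>{k. t < (SUP w\<in>HL_Delta k. cmod (f w)) \<and> hl_size k < 2 * h}. HL_Delta k)"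
    using k by blast
qed

theorem lemma2p3:
  fixes f :: "complex \<Rightarrow> complex" and \<mu> :: "complex measure" and h t :: real
  assumes "f \<in> bergman1"
    and "sets \<mu> = sets (restrict_space borel (ball 0 1))"
    and "finite_measure \<mu>"
    and "0 < h" and "h < 1 / 2" and "0 < t"
  shows "emeasure \<mu> {z \<in> ball 0 1. cmod z > 1 - h \<and> cmod (f z) > t}
           \<le> 4 * K2 \<mu> (2 * h) * emeasure area_measure {z. Lambda f z > t}"
proof -
  have "continuous_on (ball 0 1) f"
    using assms(1) holomorphic_on_imp_continuous_on by (auto simp: bergman1_def)
  define I where "I = {k. t < (SUP w\<in>HL_Delta k. cmod (f w)) \<and> hl_size k < 2 * h}"
  define A where "A k = (if k \<in> I then HL_Delta k else {})" for k
  show ?thesis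
  proof (rule emeasure_le_by_disjoint_cover[of _ A])
    show "{z \<in> ball 0 1. cmod z > 1 - h \<and> cmod (f z) > t} \<subseteq> (\<Union>k. A k)"
      using boundary_superlevel_subset[OF \<open>continuous_on (ball 0 1) f\<close>] by (auto simp: A_def I_def)
    show "(\<Union>k. A k) \<subseteq> {z. Lambda f z > t}"
    proof
      fix z assume "z \<in> (\<Union>k. A k)"
      then obtain k where "k \<in> I" "z \<in> HL_Delta k" by (auto simp: A_def split: if_splits)
      thus "z \<in> {z. Lambda f z > t}" by (simp add: I_def Lambda_eq)
    qed
    show "{z. Lambda f z > t} \<in> sets area_measure" using assms(6) by (simp add: Lambda_superlevel_borel)
    show "A k \<in> sets \<mu>" for k
      using sets_restrict_ballI[OF assms(2) HL_Delta_borel HL_Delta_subset_ball] by (simp add: A_def)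
    show "A k \<in> sets area_measure" for k by (simp add: A_def HL_Delta_borel)
    show "disjoint_family A" using HL_Delta_disjoint by (auto simp: disjoint_family_on_def A_def)
    show "emeasure \<mu> (A k) \<le> 4 * K2 \<mu> (2 * h) * emeasure area_measure (A k)" for k
    proof (cases "k \<in> I")
      case True
      hence "hl_size k < 2 * h" by (simp add: I_def)
      moreover have "hl_size k \<le> 1 / 2" using calculation assms(5) by (intro hl_size_le_half) simp
      ultimately show ?thesis using emeasure_HL_Delta_le_area[OF assms(2)] True by (simp add: A_def)
    qed (simp add: A_def)
  qed
qed

end
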